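(* Let $m\ge 2$ and let $\tau=\tau_1\tau_2\cdots\tau_k$ be a partition with exactly $m$ blocks such that $\tau_i=i$ for each $i\in[m-1]$. Then \[\sum_{n\ge0}p_n(12\cdots(m+1),\tau)x^n=\sum_{n\ge0}p_n(12\cdots(m+1))x^n-\left(\frac{x}{1-(m-1)x}\right)^{k-m}\frac{x}{1-mx}\prod_{j=1}^{m-1}\frac{x}{1-jx}.\] In particular this generating function depends only on $k$ and $m$, not on $\tau$ itself.
   Context: Set partitions of $[n]$ are represented by canonical sequential forms (restricted growth words): $\pi=\pi_1\cdots\pi_n$ with $\pi_1=1$, $\pi_{i+1}\le\max(\pi_1,\dots,\pi_i)+1$, where $\pi_j$ is the index of the block containing $j$ and blocks are ordered by their minima; the empty partition is the unique partition of $[0]$. $\pi$ contains a pattern $\tau$ if some subsequence of $\pi$ is order-isomorphic to $\tau$, and avoids it otherwise. $p_n(T)$ denotes the number of partitions of $[n]$ avoiding all patterns in $T$. *)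

theory Defs
  imports "HOL-Computational_Algebra.Formal_Power_Series"
begin

text \<open>Restricted growth words (canonical sequential forms) of set partitions.\<close>
definition rgf :: "nat list \<Rightarrow> bool" where
  "rgf xs \<longleftrightarrow> (\<forall>x\<in>set xs. 1 \<le> x) \<and> (xs \<noteq> [] \<longrightarrow> xs ! 0 = 1) \<and>
     (\<forall>i. Suc i < length xs \<longrightarrow> xs ! Suc i \<le> Max (set (take (Suc i) xs)) + 1)"

definition num_blocks :: "nat list \<Rightarrow> nat" where
  "num_blocks xs = (if xs = [] then 0 else Max (set xs))"

definition contains :: "nat list \<Rightarrow> nat list \<Rightarrow> bool" where
  "contains p tau \<longleftrightarrow> (\<exists>f. strict_mono_on {..<length tau} f \<and>
       (\<forall>i<length tau. f i < length p) \<and>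
       (\<forall>i<length tau. \<forall>j<length tau.
          (p ! f i < p ! f j \<longleftrightarrow> tau ! i < tau ! j) \<and>
          (p ! f i = p ! f j \<longleftrightarrow> tau ! i = tau ! j)))"

definition avoids :: "nat list \<Rightarrow> nat list set \<Rightarrow> bool" where
  "avoids p T \<longleftrightarrow> (\<forall>tau\<in>T. \<not> contains p tau)"

definition pcount :: "nat \<Rightarrow> nat list set \<Rightarrow> nat" where
  "pcount n T = card {p. rgf p \<and> length p = n \<and> avoids p T}"

definition pgf :: "nat list set \<Rightarrow> rat fps" where
  "pgf T = Abs_fps (\<lambda>n. of_nat (pcount n T))"

end

theory Submission
  imports Defs "HOL-Library.Sublist"
begin

text \<open>A partition avoids \<open>12\<dots>(m+1)\<close> iff it has at most \<open>m\<close> blocks. Since \<open>\<tau>\<close> uses all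
  \<open>m\<close> letters, an occurrence of \<open>\<tau>\<close> in a word over \<open>[m]\<close> is an occurrence of \<open>\<tau>\<close> itself as a
  subsequence, so the difference of the two generating functions counts restricted growth words over
  \<open>[m]\<close> containing \<open>\<tau>\<close> as a subsequence. Match \<open>\<tau>\<close> greedily from the left: while the word waits
  for block \<open>j+1\<close> to open, only the \<open>j\<close> existing blocks may occur, giving \<open>x/(1-jx)\<close>; once block
  \<open>m-1\<close> is open the growth condition is void, and words over \<open>[m]\<close> containing a fixed word of
  length \<open>l\<close> as a subsequence have generating function \<open>(x/(1-(m-1)x))\<^sup>l/(1-mx)\<close>.\<close>

unbundle fps_syntax

text \<open>\<open>rg_from j w\<close>: \<open>w\<close> may follow a restricted growth prefix with \<open>j\<close> blocks.\<close>

fun rg_from :: "nat \<Rightarrow> nat list \<Rightarrow> bool" where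
  "rg_from j [] = True"
| "rg_from j (a # w) \<longleftrightarrow> 1 \<le> a \<and> a \<le> Suc j \<and> rg_from (max j a) w"

lemma num_blocks_Nil [simp]: "num_blocks [] = 0"
  by (simp add: num_blocks_def)

lemma num_blocks_Cons: "num_blocks (a # w) = max a (num_blocks w)"
  by (cases "w = []") (auto simp: num_blocks_def)

lemma rg_from_iff_nth:
  "rg_from j w \<longleftrightarrow> (\<forall>i<length w. 1 \<le> w ! i \<and> w ! i \<le> Suc (max j (num_blocks (take i w))))"
  by (induction w arbitrary: j) (simp_all add: All_less_Suc2 num_blocks_Cons max.assoc)

lemma rgf_iff_rg_from: "rgf p \<longleftrightarrow> rg_from 0 p"
proof -
  have blocks_take: "num_blocks (take (Suc i) p) = Max (set (take (Suc i) p))"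
    if "Suc i < length p" for i
    using that by (auto simp: num_blocks_def)
  show ?thesis
  proof
    assume rgf: "rgf p"
    show "rg_from 0 p"
      unfolding rg_from_iff_nth
    proof (intro allI impI conjI)
      fix i assume i: "i < length p"
      show "1 \<le> p ! i"
        using rgf i unfolding rgf_def by simp
      show "p ! i \<le> Suc (max 0 (num_blocks (take i p)))"
        using rgf i blocks_take unfolding rgf_def by (cases i) auto
    qed
  next
    assume "rg_from 0 p"
    then have "\<forall>i<length p. 1 \<le> p ! i \<and> p ! i \<le> Suc (num_blocks (take i p))"
      by (simp add: rg_from_iff_nth)
    then show "rgf p"
      unfolding rgf_def by (auto simp: in_set_conv_nth blocks_take)
  qed
qed

lemma rg_from_set:
  "rg_from j w \<Longrightarrow> {1..j} \<union> set w = {1..max j (num_blocks w)}"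
proof (induction w arbitrary: j)
  case (Cons a w)
  have "{1..j} \<union> set (a # w) = ({1..j} \<union> {a}) \<union> set w"
    by auto
  also have "{1..j} \<union> {a} = {1..max j a}"
    using Cons.prems by (auto simp: max_def)
  also have "{1..max j a} \<union> set w = {1..max (max j a) (num_blocks w)}"
    using Cons by simp
  finally show ?case
    by (simp add: num_blocks_Cons max.assoc)
qed simp

lemma rgf_set: "rgf p \<Longrightarrow> set p = {1..num_blocks p}"
  using rg_from_set[of 0 p] by (simp add: rgf_iff_rg_from)

lemma rgf_num_blocks_le_length: "rgf p \<Longrightarrow> num_blocks p \<le> length p"
  using card_length[of p] by (simp add: rgf_set)

lemma finite_rgf_length: "finite {p. rgf p \<and> length p = n}"
proof (rule finite_subset)
  show "{p. rgf p \<and> length p = n} \<subseteq> {p. set p \<subseteq> {1..n} \<and> length p = n}"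
    using rgf_set rgf_num_blocks_le_length by fastforce
qed (simp add: finite_lists_length_eq)

lemma rg_from_if_letters_le: "m \<le> Suc j \<Longrightarrow> set w \<subseteq> {1..m} \<Longrightarrow> rg_from j w"
  by (induction w arbitrary: j) auto

text \<open>To exceed \<open>c\<close>, a restricted growth word must climb through every value above its start.\<close>
lemma rg_from_subseq_upt:
  "rg_from j w \<Longrightarrow> j \<le> c \<Longrightarrow> \<exists>x\<in>set w. c < x \<Longrightarrow> subseq [Suc j..<c + 2] w"
proof (induction w arbitrary: j)
  case (Cons a w)
  show ?case
  proof (cases "a = Suc j")
    case True
    show ?thesis
    proof (cases "j = c")
      case False
      with Cons.prems True have "subseq [Suc (Suc j)..<c + 2] w"
        by (intro Cons.IH) auto
      moreover have "[Suc j..<c + 2] = Suc j # [Suc (Suc j)..<c + 2]"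
        using Cons.prems by (simp add: upt_conv_Cons del: upt_Suc)
      ultimately show ?thesis
        using True by simp
    qed (use True in simp)
  next
    case False
    with Cons.prems have "max j a = j"
      by auto
    with Cons.prems False have "subseq [Suc j..<c + 2] w"
      by (intro Cons.IH) auto
    then show ?thesis
      by (simp add: list_emb_Cons)
  qed
qed simp

lemma subseq_iff_index_embedding:
  "subseq u p \<longleftrightarrow>
     (\<exists>f. strict_mono_on {..<length u} f \<and> (\<forall>i<length u. f i < length p \<and> p ! f i = u ! i))"
proof
  show "subseq u p \<Longrightarrow> \<exists>f. strict_mono_on {..<length u} f \<and>
          (\<forall>i<length u. f i < length p \<and> p ! f i = u ! i)"
  proof (induction rule: list_emb.induct)
    case (list_emb_Nil ys)
    then show ?case
      by (auto simp: monotone_on_def)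
  next
    case (list_emb_Cons xs ys y)
    then obtain f where "strict_mono_on {..<length xs} f"
      "\<forall>i<length xs. f i < length ys \<and> ys ! f i = xs ! i"
      by blast
    then show ?case
      by (intro exI[of _ "Suc \<circ> f"]) (auto simp: monotone_on_def)
  next
    case (list_emb_Cons2 x y xs ys)
    then obtain f where f: "strict_mono_on {..<length xs} f"
      "\<forall>i<length xs. f i < length ys \<and> ys ! f i = xs ! i"
      by blast
    define g where "g i = (case i of 0 \<Rightarrow> 0 | Suc i \<Rightarrow> Suc (f i))" for i
    have "strict_mono_on {..<length (x # xs)} g"
      using f(1) by (auto simp: monotone_on_def g_def split: nat.split)
    moreover have "\<forall>i<length (x # xs). g i < length (y # ys) \<and> (y # ys) ! g i = (x # xs) ! i"
      using f(2) list_emb_Cons2.hyps(1) by (auto simp: g_def nth_Cons split: nat.split)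
    ultimately show ?case
      by blast
  qed
next
  show "\<exists>f. strict_mono_on {..<length u} f \<and> (\<forall>i<length u. f i < length p \<and> p ! f i = u ! i)
          \<Longrightarrow> subseq u p"
  proof (induction u arbitrary: p)
    case (Cons a u)
    then obtain f where mono: "strict_mono_on {..<Suc (length u)} f"
      and emb: "\<forall>i<Suc (length u). f i < length p \<and> p ! f i = (a # u) ! i"
      by auto
    define k where "k = f 0"
    have split: "p = take k p @ a # drop (Suc k) p"
      using emb by (metis id_take_nth_drop k_def nth_Cons_0 zero_less_Suc)
    have above: "k < f (Suc i)" if "i < length u" for i
      using mono that unfolding k_def by (auto intro: strict_mono_onD)
    have "strict_mono_on {..<length u} (\<lambda>i. f (Suc i) - Suc k)"
    proof (rule strict_mono_onI)
      fix i j assume "i \<in> {..<length u}" "j \<in> {..<length u}" "i < j"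
      then show "f (Suc i) - Suc k < f (Suc j) - Suc k"
        using above[of i] strict_mono_onD[OF mono, of "Suc i" "Suc j"] by simp
    qed
    moreover have "f (Suc i) - Suc k < length (drop (Suc k) p) \<and>
        drop (Suc k) p ! (f (Suc i) - Suc k) = u ! i" if "i < length u" for i
      using emb[rule_format, of "Suc i"] above[OF that] that by auto
    ultimately have "subseq u (drop (Suc k) p)"
      by (intro Cons.IH exI[of _ "\<lambda>i. f (Suc i) - Suc k"]) simp
    then have "subseq (a # u) (a # drop (Suc k) p)"
      by simp
    then show ?case
      using split by (metis list_emb_append2)
  qed simp
qed

lemma subseq_imp_contains: "subseq u p \<Longrightarrow> contains p u"
  unfolding contains_def subseq_iff_index_embedding by auto

lemma strict_mono_on_interval_self_map:
  fixes g :: "nat \<Rightarrow> nat"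
  assumes mono: "strict_mono_on {1..m} g" and maps: "g ` {1..m} \<subseteq> {1..m}" and v: "v \<in> {1..m}"
  shows "g v = v"
proof -
  have "v \<le> g v" if "v \<in> {1..m}" for v
    using that
  proof (induction v)
    case (Suc v)
    show ?case
    proof (cases "v = 0")
      case True
      then show ?thesis
        using maps Suc.prems by force
    next
      case False
      with Suc have "v \<le> g v" "g v < g (Suc v)"
        by (auto intro: strict_mono_onD[OF mono])
      then show ?thesis
        by simp
    qed
  qed simp
  moreover have "g v \<le> v" if "v \<in> {1..m}" for v
    using that
  proof (induction "m - v" arbitrary: v)
    case 0
    then show ?case
      using maps by fastforce
  next
    case (Suc d)
    then have "g (Suc v) \<le> Suc v" "g v < g (Suc v)"
      by (auto intro: strict_mono_onD[OF mono])
    then show ?case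
      by simp
  qed
  ultimately show ?thesis
    using v by (simp add: le_antisym)
qed

text \<open>If \<open>u\<close> uses every letter of the alphabet of \<open>p\<close>, an occurrence of \<open>u\<close> in \<open>p\<close>
  induces a strictly increasing self-map of the alphabet, which must be the identity.\<close>
lemma contains_imp_subseq:
  assumes p: "set p \<subseteq> {1..m}" and u: "set u = {1..m}" and "contains p u"
  shows "subseq u p"
proof -
  obtain f where mono: "strict_mono_on {..<length u} f" and bound: "\<forall>i<length u. f i < length p"
    and iso: "\<forall>i<length u. \<forall>j<length u.
      (p ! f i < p ! f j \<longleftrightarrow> u ! i < u ! j) \<and> (p ! f i = p ! f j \<longleftrightarrow> u ! i = u ! j)"
    using \<open>contains p u\<close> unfolding contains_def by blast
  have "\<forall>v\<in>{1..m}. \<exists>i. i < length u \<and> u ! i = v"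
    using u by (auto simp: in_set_conv_nth[symmetric])
  then obtain idx where idx: "\<forall>v\<in>{1..m}. idx v < length u \<and> u ! idx v = v"
    by metis
  define g where "g v = p ! f (idx v)" for v
  have "strict_mono_on {1..m} g"
  proof (rule strict_mono_onI)
    fix v w assume "v \<in> {1..m}" "w \<in> {1..m}" "v < w"
    then show "g v < g w"
      using idx iso unfolding g_def by metis
  qed
  moreover have "g ` {1..m} \<subseteq> {1..m}"
    using idx bound p by (auto simp: g_def)
  ultimately have g_id: "g v = v" if "v \<in> {1..m}" for v
    using that by (rule strict_mono_on_interval_self_map)
  have "p ! f i = u ! i" if i: "i < length u" for i
  proof -
    have ui: "u ! i \<in> {1..m}"
      using i u nth_mem by blast
    then have "p ! f (idx (u ! i)) = p ! f i"
      using idx iso i by blast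
    then show ?thesis
      using g_id[OF ui] by (simp add: g_def)
  qed
  then show ?thesis
    unfolding subseq_iff_index_embedding using mono bound by blast
qed

lemma not_contains_increasing:
  assumes "set p \<subseteq> {1..m}"
  shows "\<not> contains p [1..<m + 2]"
proof
  let ?inc = "[1..<m + 2]"
  assume "contains p ?inc"
  then obtain f where bound: "\<forall>i<length ?inc. f i < length p"
    and iso: "\<forall>i<length ?inc. \<forall>j<length ?inc. p ! f i = p ! f j \<longleftrightarrow> ?inc ! i = ?inc ! j"
    unfolding contains_def by blast
  have "inj_on (\<lambda>i. p ! f i) {..<m + 1}"
    using iso by (intro inj_onI) (simp del: upt_Suc)
  moreover have "(\<lambda>i. p ! f i) ` {..<m + 1} \<subseteq> {1..m}"
    using bound assms nth_mem by (fastforce simp del: upt_Suc)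
  ultimately have "card {..<m + 1} \<le> card {1..m}"
    by (intro card_inj_on_le) auto
  then show False
    by simp
qed

lemma rgf_contains_increasing_iff:
  assumes "rgf p"
  shows "contains p [1..<m + 2] \<longleftrightarrow> m < num_blocks p"
proof
  assume "contains p [1..<m + 2]"
  then have "\<not> set p \<subseteq> {1..m}"
    using not_contains_increasing by blast
  then show "m < num_blocks p"
    by (simp add: rgf_set[OF assms])
next
  assume "m < num_blocks p"
  then have "\<exists>x\<in>set p. m < x"
    using rgf_set[OF assms] by auto
  then have "subseq [1..<m + 2] p"
    using rg_from_subseq_upt[of 0 p m] assms by (simp add: rgf_iff_rg_from)
  then show "contains p [1..<m + 2]"
    by (rule subseq_imp_contains)
qed

lemma card_lists_length_Suc_split:
  assumes "finite A"
  shows "card {w. length w = Suc n \<and> set w \<subseteq> A \<and> P w} =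
         (\<Sum>a\<in>A. card {w. length w = n \<and> set w \<subseteq> A \<and> P (a # w)})"
proof -
  let ?B = "\<lambda>a. {w. length w = n \<and> set w \<subseteq> A \<and> P (a # w)}"
  have split: "{w. length w = Suc n \<and> set w \<subseteq> A \<and> P w} = (\<Union>a\<in>A. Cons a ` ?B a)"
    by (auto simp: length_Suc_conv)
  have "finite (?B a)" for a
    by (rule finite_subset[OF _ finite_lists_length_eq[OF assms, of n]]) auto
  then have "card (\<Union>a\<in>A. Cons a ` ?B a) = (\<Sum>a\<in>A. card (Cons a ` ?B a))"
    using assms by (intro card_UN_disjoint) auto
  with split show ?thesis
    by (simp add: card_image)
qed

definition words_containing :: "'a set \<Rightarrow> 'a list \<Rightarrow> nat \<Rightarrow> 'a list set" where
  "words_containing A u n = {w. length w = n \<and> set w \<subseteq> A \<and> subseq u w}"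

lemma card_words_containing_Nil:
  "finite A \<Longrightarrow> card (words_containing A [] n) = card A ^ n"
  using card_lists_length_eq[of A n] by (simp add: words_containing_def conj_commute)

lemma words_containing_Cons_0 [simp]: "words_containing A (a # u) 0 = {}"
  by (simp add: words_containing_def)

text \<open>Greedy matching: the first letter starts the occurrence of \<open>a # u\<close> exactly when it is \<open>a\<close>.\<close>
lemma card_words_containing_Cons_Suc:
  assumes "finite A" "a \<in> A"
  shows "card (words_containing A (a # u) (Suc n)) =
           card (words_containing A u n) + (card A - 1) * card (words_containing A (a # u) n)"
proof -
  have "card (words_containing A (a # u) (Suc n)) =
      (\<Sum>b\<in>A. card {w. length w = n \<and> set w \<subseteq> A \<and> subseq (a # u) (b # w)})"
    unfolding words_containing_def using assms(1) by (rule card_lists_length_Suc_split)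
  also have "\<dots> = (\<Sum>b\<in>A. if b = a then card (words_containing A u n)
                            else card (words_containing A (a # u) n))"
    by (rule sum.cong) (auto simp: words_containing_def)
  also have "\<dots> = card (words_containing A u n) + (card A - 1) * card (words_containing A (a # u) n)"
    using assms by (simp add: sum.If_cases Int_absorb1 Diff_eq[symmetric])
  finally show ?thesis .
qed

definition rg_words_containing :: "nat \<Rightarrow> nat \<Rightarrow> nat list \<Rightarrow> nat \<Rightarrow> nat list set" where
  "rg_words_containing m j u n = {w. length w = n \<and> set w \<subseteq> {1..m} \<and> rg_from j w \<and> subseq u w}"

lemma rg_words_containing_Cons_0 [simp]: "rg_words_containing m j (a # u) 0 = {}"
  by (simp add: rg_words_containing_def)

lemma rg_words_containing_top:
  "m \<le> Suc j \<Longrightarrow> rg_words_containing m j u n = words_containing {1..m} u n"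
  unfolding rg_words_containing_def words_containing_def using rg_from_if_letters_le by blast

text \<open>The first letter is either an old block (\<open>j\<close> choices, occurrence not started) or opens
  block \<open>Suc j\<close>, which starts the occurrence of \<open>Suc j # u\<close>; larger letters are forbidden.\<close>
lemma card_rg_words_containing_Cons_Suc:
  assumes "Suc j < m"
  shows "card (rg_words_containing m j (Suc j # u) (Suc n)) =
           j * card (rg_words_containing m j (Suc j # u) n) + card (rg_words_containing m (Suc j) u n)"
proof -
  let ?first = "\<lambda>b. card {w. length w = n \<and> set w \<subseteq> {1..m} \<and>
                                rg_from j (b # w) \<and> subseq (Suc j # u) (b # w)}"
  have "card (rg_words_containing m j (Suc j # u) (Suc n)) = (\<Sum>b\<in>{1..m}. ?first b)"
    unfolding rg_words_containing_def by (rule card_lists_length_Suc_split) simp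
  also have "\<dots> = (\<Sum>b\<in>{1..Suc j}. ?first b)"
    using assms by (intro sum.mono_neutral_right) auto
  also have "\<dots> = (\<Sum>b\<in>{1..j}. ?first b) + ?first (Suc j)"
    by simp
  also have "(\<Sum>b\<in>{1..j}. ?first b) = j * card (rg_words_containing m j (Suc j # u) n)"
  proof -
    have "?first b = card (rg_words_containing m j (Suc j # u) n)" if "b \<in> {1..j}" for b
      using that assms by (auto simp: rg_words_containing_def max_def intro!: arg_cong[of _ _ card])
    then show ?thesis
      by simp
  qed
  also have "?first (Suc j) = card (rg_words_containing m (Suc j) u n)"
    using assms by (auto simp: rg_words_containing_def intro!: arg_cong[of _ _ card])
  finally show ?thesis .
qed

lemma fps_coeff_one_minus_of_nat_X_mult:
  fixes F :: "'a::comm_ring_1 fps"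
  shows "((1 - of_nat c * fps_X) * F) $ n = F $ n - (if n = 0 then 0 else of_nat c * F $ (n - 1))"
proof -
  have "(1 - of_nat c * fps_X) * F = F - fps_const (of_nat c) * (fps_X * F)"
    by (simp add: algebra_simps fps_of_nat)
  then show ?thesis
    by simp
qed

lemma fps_eq_inverse_mult:
  fixes D F H :: "'a::field fps"
  assumes "D $ 0 \<noteq> 0" "D * F = H"
  shows "F = inverse D * H"
proof -
  have "F = inverse D * D * F"
    using assms(1) by (simp add: inverse_mult_eq_1)
  then show ?thesis
    using assms(2) by (simp add: mult.assoc)
qed

definition words_containing_gf :: "'a set \<Rightarrow> 'a list \<Rightarrow> rat fps" where
  "words_containing_gf A u = Abs_fps (\<lambda>n. of_nat (card (words_containing A u n)))"

lemma words_containing_gf_Nil: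
  assumes "finite A"
  shows "words_containing_gf A [] = inverse (1 - of_nat (card A) * fps_X)"
proof -
  have "(1 - of_nat (card A) * fps_X) * words_containing_gf A [] = 1"
  proof (rule fps_ext)
    show "((1 - of_nat (card A) * fps_X) * words_containing_gf A []) $ n = (1 :: rat fps) $ n" for n
      by (cases n) (simp_all add: fps_coeff_one_minus_of_nat_X_mult words_containing_gf_def
          card_words_containing_Nil[OF assms])
  qed
  from fps_eq_inverse_mult[OF _ this] show ?thesis
    by simp
qed

lemma words_containing_gf_Cons:
  assumes "finite A" "a \<in> A"
  shows "words_containing_gf A (a # u) =
           fps_X / (1 - of_nat (card A - 1) * fps_X) * words_containing_gf A u"
proof -
  have "(1 - of_nat (card A - 1) * fps_X) * words_containing_gf A (a # u) =
      fps_X * words_containing_gf A u"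
  proof (rule fps_ext)
    show "((1 - of_nat (card A - 1) * fps_X) * words_containing_gf A (a # u)) $ n =
        (fps_X * words_containing_gf A u) $ n" for n
      by (cases n) (simp_all add: fps_coeff_one_minus_of_nat_X_mult words_containing_gf_def
          card_words_containing_Cons_Suc[OF assms])
  qed
  from fps_eq_inverse_mult[OF _ this] show ?thesis
    by (simp add: fps_divide_unit)
qed

lemma words_containing_gf_formula:
  assumes "finite A" "set u \<subseteq> A"
  shows "words_containing_gf A u =
           (fps_X / (1 - of_nat (card A - 1) * fps_X)) ^ length u * inverse (1 - of_nat (card A) * fps_X)"
  using assms(2)
  by (induction u) (simp_all add: words_containing_gf_Nil words_containing_gf_Cons assms(1) mult.assoc)

definition rg_words_containing_gf :: "nat \<Rightarrow> nat \<Rightarrow> nat list \<Rightarrow> rat fps" where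
  "rg_words_containing_gf m j u = Abs_fps (\<lambda>n. of_nat (card (rg_words_containing m j u n)))"

lemma rg_words_containing_gf_top:
  "m \<le> Suc j \<Longrightarrow> rg_words_containing_gf m j u = words_containing_gf {1..m} u"
  by (simp add: rg_words_containing_gf_def words_containing_gf_def rg_words_containing_top)

lemma rg_words_containing_gf_Cons:
  assumes "Suc j < m"
  shows "rg_words_containing_gf m j (Suc j # u) =
           fps_X / (1 - of_nat j * fps_X) * rg_words_containing_gf m (Suc j) u"
proof -
  have "(1 - of_nat j * fps_X) * rg_words_containing_gf m j (Suc j # u) =
      fps_X * rg_words_containing_gf m (Suc j) u"
  proof (rule fps_ext)
    show "((1 - of_nat j * fps_X) * rg_words_containing_gf m j (Suc j # u)) $ n =
        (fps_X * rg_words_containing_gf m (Suc j) u) $ n" for n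
      by (cases n) (simp_all add: fps_coeff_one_minus_of_nat_X_mult rg_words_containing_gf_def
          card_rg_words_containing_Cons_Suc[OF assms])
  qed
  from fps_eq_inverse_mult[OF _ this] show ?thesis
    by (simp add: fps_divide_unit)
qed

lemma rg_words_containing_gf_staircase:
  assumes "j < m"
  shows "rg_words_containing_gf m j ([Suc j..<m] @ v) =
           (\<Prod>i\<in>{j..<m - 1}. fps_X / (1 - of_nat i * fps_X)) * words_containing_gf {1..m} v"
  using assms
proof (induction "m - Suc j" arbitrary: j)
  case 0
  then show ?case
    by (simp add: rg_words_containing_gf_top)
next
  case (Suc d)
  then have "[Suc j..<m] = Suc j # [Suc (Suc j)..<m]" "{j..<m - 1} = insert j {Suc j..<m - 1}"
    by (auto simp: upt_conv_Cons)
  with Suc show ?case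
    by (simp add: rg_words_containing_gf_Cons mult.assoc)
qed

lemma rgf_avoiding_diff_eq:
  assumes "set tau = {1..m}"
  shows "{p. rgf p \<and> length p = n \<and> avoids p {[1..<m + 2]}} -
           {p. rgf p \<and> length p = n \<and> avoids p {[1..<m + 2], tau}} =
         rg_words_containing m 0 tau n"
proof -
  have "\<not> contains p [1..<m + 2] \<and> contains p tau \<longleftrightarrow> set p \<subseteq> {1..m} \<and> subseq tau p"
    if "rgf p" for p
  proof -
    have "\<not> contains p [1..<m + 2] \<longleftrightarrow> set p \<subseteq> {1..m}"
      using rgf_contains_increasing_iff[OF that, of m] rgf_set[OF that] by auto
    then show ?thesis
      using assms contains_imp_subseq subseq_imp_contains by blast
  qed
  then show ?thesis
    unfolding avoids_def rg_words_containing_def rgf_iff_rg_from[symmetric]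
    by (auto simp del: upt_Suc)
qed

lemma pgf_add_pattern:
  assumes "set tau = {1..m}"
  shows "pgf {[1..<m + 2], tau} = pgf {[1..<m + 2]} - rg_words_containing_gf m 0 tau"
proof (rule fps_ext)
  fix n
  let ?P = "\<lambda>T. {p. rgf p \<and> length p = n \<and> avoids p T}"
  have fin: "finite (?P T)" for T
    by (rule finite_subset[OF _ finite_rgf_length[of n]]) auto
  have sub: "?P {[1..<m + 2], tau} \<subseteq> ?P {[1..<m + 2]}"
    by (auto simp: avoids_def)
  have "card (rg_words_containing m 0 tau n) = pcount n {[1..<m + 2]} - pcount n {[1..<m + 2], tau}"
    unfolding pcount_def rgf_avoiding_diff_eq[OF assms, symmetric]
    by (rule card_Diff_subset[OF fin sub])
  moreover have "pcount n {[1..<m + 2], tau} \<le> pcount n {[1..<m + 2]}"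
    unfolding pcount_def by (rule card_mono[OF fin sub])
  ultimately show "pgf {[1..<m + 2], tau} $ n = (pgf {[1..<m + 2]} - rg_words_containing_gf m 0 tau) $ n"
    by (simp add: pgf_def rg_words_containing_gf_def of_nat_diff)
qed

lemma rg_words_containing_gf_canonical:
  assumes "1 \<le> m" "set tau = {1..m}" "take (m - 1) tau = [1..<m]"
  shows "rg_words_containing_gf m 0 tau =
           (fps_X / (1 - of_nat (m - 1) * fps_X)) ^ (length tau - m)
           * (fps_X / (1 - of_nat m * fps_X))
           * (\<Prod>j\<in>{1..m - 1}. fps_X / (1 - of_nat j * fps_X))"
proof -
  let ?q = "\<lambda>j. fps_X / (1 - of_nat j * fps_X) :: rat fps"
  define v where "v = drop (m - 1) tau"
  have "m \<le> length tau"
    using card_length[of tau] assms(2) by simp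
  then have len_v: "length v = Suc (length tau - m)"
    using assms(1) by (simp add: v_def)
  have "set v \<subseteq> {1..m}"
    using set_drop_subset[of "m - 1" tau] assms(2) by (simp add: v_def)
  then have "words_containing_gf {1..m} v = ?q (m - 1) ^ length v * inverse (1 - of_nat m * fps_X)"
    by (simp add: words_containing_gf_formula)
  then have gf_v: "words_containing_gf {1..m} v =
      ?q (m - 1) ^ (length tau - m) * ?q (m - 1) * inverse (1 - of_nat m * fps_X)"
    by (simp only: len_v power_Suc2)
  have prod: "(\<Prod>i\<in>{0..<m - 1}. ?q i) * ?q (m - 1) = fps_X * (\<Prod>j\<in>{1..m - 1}. ?q j)"
  proof -
    have "(\<Prod>i\<in>{0..<m - 1}. ?q i) * ?q (m - 1) = (\<Prod>i\<in>{0..<m}. ?q i)"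
      using assms(1) prod.atLeastLessThan_Suc[of 0 "m - 1" ?q] by simp
    also have "\<dots> = ?q 0 * (\<Prod>j\<in>{1..<m}. ?q j)"
      using assms(1) by (simp add: prod.atLeast_Suc_lessThan)
    also have "{1..<m} = {1..m - 1}"
      using assms(1) by auto
    finally show ?thesis
      by simp
  qed
  have "tau = [1..<m] @ v"
    using assms(3) append_take_drop_id[of "m - 1" tau] by (simp add: v_def)
  then have "rg_words_containing_gf m 0 tau = (\<Prod>i\<in>{0..<m - 1}. ?q i) * words_containing_gf {1..m} v"
    using rg_words_containing_gf_staircase[of 0 m v] assms(1) by simp
  also have "\<dots> = ?q (m - 1) ^ (length tau - m)
      * (fps_X * inverse (1 - of_nat m * fps_X)) * (\<Prod>j\<in>{1..m - 1}. ?q j)"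
    unfolding gf_v using prod by (simp add: ac_simps)
  also have "fps_X * inverse (1 - of_nat m * fps_X) = ?q m"
    by (simp add: fps_divide_unit)
  finally show ?thesis .
qed

theorem theorem2p8:
  fixes m :: nat and tau :: "nat list"
  assumes "m \<ge> 2"
    and "rgf tau"
    and "num_blocks tau = m"
    and "\<forall>i\<in>{1..m-1}. tau ! (i - 1) = i"
  shows "pgf {[1..<m+2], tau} =
           pgf {[1..<m+2]}
           - (fps_X / (1 - of_nat (m - 1) * fps_X)) ^ (length tau - m)
             * (fps_X / (1 - of_nat m * fps_X))
             * (\<Prod>j\<in>{1..m-1}. fps_X / (1 - of_nat j * fps_X))"
proof -
  have set_tau: "set tau = {1..m}"
    using rgf_set[OF assms(2)] assms(3) by simp
  have "m \<le> length tau"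
    using card_length[of tau] set_tau by simp
  moreover have "tau ! i = Suc i" if "i < m - 1" for i
    using assms(4)[rule_format, of "Suc i"] that by simp
  ultimately have prefix: "take (m - 1) tau = [1..<m]"
    by (intro nth_equalityI) auto
  have "1 \<le> m"
    using assms(1) by simp
  then show ?thesis
    by (simp only: pgf_add_pattern[OF set_tau] rg_words_containing_gf_canonical[OF _ set_tau prefix])
qed

end
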